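(* For every integer $n\ge 0$, the strong product $P_3\boxtimes (R_n\ast K_1)$ is $1$-perfectly orientable.
   Context: All graphs are finite and simple. An orientation of a graph $G$ is $1$-perfect if the out-neighborhood of every vertex induces a clique in $G$; $G$ is $1$-perfectly orientable if it admits a $1$-perfect orientation. The strong product $G\boxtimes H$ has vertex set $V(G)\times V(H)$, with distinct $(u,v),(u',v')$ adjacent iff $u'\in N_G[u]$ and $v'\in N_H[v]$ (closed neighborhoods). $P_3$ is the path on $3$ vertices. For an integer $n\ge 0$, the raft $R_n$ is the graph with vertex set $X\cup Y$, where $X=\{x_0,\dots,x_n\}$ and $Y=\{y_0,\dots,y_n\}$ are disjoint cliques, and, for $0\le i,j\le n$, $x_i$ is adjacent to $y_j$ iff $i+j\ge n+1$ (no other edges). $R_n\ast K_1$ is $R_n$ with an added vertex adjacent to all vertices of $R_n$. *)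

theory Defs
  imports Main
begin

text \<open>A (finite, simple) graph is given by a vertex set V and an adjacency relation E,
  which is assumed symmetric and irreflexive on V (all graphs below are constructed so).\<close>

definition is_orientation :: "'a set \<Rightarrow> ('a \<Rightarrow> 'a \<Rightarrow> bool) \<Rightarrow> ('a \<Rightarrow> 'a \<Rightarrow> bool) \<Rightarrow> bool" where
  "is_orientation V E D \<longleftrightarrow>
     (\<forall>u v. D u v \<longrightarrow> u \<in> V \<and> v \<in> V \<and> E u v) \<and>
     (\<forall>u\<in>V. \<forall>v\<in>V. E u v \<longrightarrow> (D u v \<or> D v u) \<and> \<not> (D u v \<and> D v u))"

definition one_perfect_orientation :: "'a set \<Rightarrow> ('a \<Rightarrow> 'a \<Rightarrow> bool) \<Rightarrow> ('a \<Rightarrow> 'a \<Rightarrow> bool) \<Rightarrow> bool" where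
  "one_perfect_orientation V E D \<longleftrightarrow> is_orientation V E D \<and>
     (\<forall>v\<in>V. \<forall>u\<in>V. \<forall>w\<in>V. D v u \<and> D v w \<and> u \<noteq> w \<longrightarrow> E u w)"

definition one_perfectly_orientable :: "'a set \<Rightarrow> ('a \<Rightarrow> 'a \<Rightarrow> bool) \<Rightarrow> bool" where
  "one_perfectly_orientable V E \<longleftrightarrow> (\<exists>D. one_perfect_orientation V E D)"

definition strong_prod_V :: "'a set \<Rightarrow> 'b set \<Rightarrow> ('a \<times> 'b) set" where
  "strong_prod_V V1 V2 = V1 \<times> V2"

definition strong_prod_E :: "'a set \<Rightarrow> ('a \<Rightarrow> 'a \<Rightarrow> bool) \<Rightarrow> 'b set \<Rightarrow> ('b \<Rightarrow> 'b \<Rightarrow> bool)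
    \<Rightarrow> ('a \<times> 'b) \<Rightarrow> ('a \<times> 'b) \<Rightarrow> bool" where
  "strong_prod_E V1 E1 V2 E2 p q \<longleftrightarrow>
     p \<in> V1 \<times> V2 \<and> q \<in> V1 \<times> V2 \<and> p \<noteq> q \<and>
     (fst q = fst p \<or> E1 (fst p) (fst q)) \<and> (snd q = snd p \<or> E2 (snd p) (snd q))"

definition P3_V :: "nat set" where "P3_V = {0, 1, 2}"
definition P3_E :: "nat \<Rightarrow> nat \<Rightarrow> bool" where
  "P3_E i j \<longleftrightarrow> i \<in> P3_V \<and> j \<in> P3_V \<and> (j = i + 1 \<or> i = j + 1)"

text \<open>Vertices of R_n * K_1: x_i, y_i and the apex (the added K_1 vertex).\<close>
datatype rvert = RX nat | RY nat | Apex

definition raft_apex_V :: "nat \<Rightarrow> rvert set" where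
  "raft_apex_V n = {RX i | i. i \<le> n} \<union> {RY i | i. i \<le> n} \<union> {Apex}"

fun raft_adj :: "nat \<Rightarrow> rvert \<Rightarrow> rvert \<Rightarrow> bool" where
  "raft_adj n (RX i) (RX j) = (i \<noteq> j)"
| "raft_adj n (RY i) (RY j) = (i \<noteq> j)"
| "raft_adj n (RX i) (RY j) = (i + j \<ge> n + 1)"
| "raft_adj n (RY j) (RX i) = (i + j \<ge> n + 1)"
| "raft_adj n Apex Apex = False"
| "raft_adj n Apex _ = True"
| "raft_adj n _ Apex = True"

definition raft_apex_E :: "nat \<Rightarrow> rvert \<Rightarrow> rvert \<Rightarrow> bool" where
  "raft_apex_E n u v \<longleftrightarrow> u \<in> raft_apex_V n \<and> v \<in> raft_apex_V n \<and> raft_adj n u v"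

end

theory Submission
  imports Defs
begin

text \<open>
  In each copy \<open>{a} \<times> (R\<^sub>n \<ast> K\<^sub>1)\<close> of the product the apex is a sink, the cliques \<open>X\<close> and \<open>Y\<close>
  are oriented by increasing index, and the edges between \<open>X\<close> and \<open>Y\<close> point towards \<open>Y\<close>, except in
  copy \<open>0\<close>, where they point towards \<open>X\<close>. This is 1-perfect because the neighbourhoods in a raft are
  nested: if \<open>x\<^sub>i y\<^sub>j\<close> is an edge then so are \<open>x\<^sub>k y\<^sub>j\<close> for \<open>k \<ge> i\<close> and \<open>x\<^sub>i y\<^sub>k\<close> for \<open>k \<ge> j\<close>.
  Edges between copy \<open>0\<close> and the middle copy point into the middle copy exactly when they end in
  its apex, in its \<open>X\<close>, or go from \<open>y\<^sub>j\<close> up to some \<open>y\<^sub>i\<close> with \<open>j < i\<close>; copy \<open>2\<close> is treated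
  symmetrically with the roles of \<open>X\<close> and \<open>Y\<close> exchanged. A finite case analysis, using only the
  nestedness of the raft, shows that all out-neighbourhoods are cliques.
\<close>

lemma one_perfectly_orientableI:
  assumes edges_in_V: "\<And>u v. E u v \<Longrightarrow> u \<in> V \<and> v \<in> V"
    and sym: "\<And>u v. E u v \<Longrightarrow> E v u"
    and antisym: "\<And>u v. E u v \<Longrightarrow> R u v \<noteq> R v u"
    and out_clique: "\<And>v u w. E v u \<Longrightarrow> E v w \<Longrightarrow> R v u \<Longrightarrow> R v w \<Longrightarrow> u \<noteq> w \<Longrightarrow> E u w"
  shows "one_perfectly_orientable V E"
proof -
  define D where "D u v \<longleftrightarrow> E u v \<and> R u v" for u v
  have "is_orientation V E D"
    unfolding is_orientation_def D_def using edges_in_V sym antisym by blast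
  moreover have "\<forall>v\<in>V. \<forall>u\<in>V. \<forall>w\<in>V. D v u \<and> D v w \<and> u \<noteq> w \<longrightarrow> E u w"
    unfolding D_def using out_clique by blast
  ultimately show ?thesis
    unfolding one_perfectly_orientable_def one_perfect_orientation_def by blast
qed

lemma strong_prod_E_in_V:
  "strong_prod_E V1 E1 V2 E2 p q \<Longrightarrow> p \<in> strong_prod_V V1 V2 \<and> q \<in> strong_prod_V V1 V2"
  by (simp add: strong_prod_E_def strong_prod_V_def)

lemma strong_prod_E_sym:
  assumes "\<And>u v. E1 u v \<Longrightarrow> E1 v u" and "\<And>u v. E2 u v \<Longrightarrow> E2 v u"
  shows "strong_prod_E V1 E1 V2 E2 p q \<Longrightarrow> strong_prod_E V1 E1 V2 E2 q p"
  using assms unfolding strong_prod_E_def by auto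

lemma P3_E_sym: "P3_E i j \<Longrightarrow> P3_E j i"
  unfolding P3_E_def by auto

lemma raft_apex_E_sym: "raft_apex_E n u v \<Longrightarrow> raft_apex_E n v u"
  unfolding raft_apex_E_def by (cases u; cases v) auto

lemma raft_apex_V_cases:
  assumes "v \<in> raft_apex_V n"
  obtains i where "v = RX i" "i \<le> n" | i where "v = RY i" "i \<le> n" | "v = Apex"
  using assms unfolding raft_apex_V_def by blast

lemma P3_V_cases:
  assumes "a \<in> P3_V"
  obtains "a = 0" | "a = 1" | "a = 2"
  using assms unfolding P3_V_def by blast

fun layer_arc :: "nat \<Rightarrow> rvert \<Rightarrow> rvert \<Rightarrow> bool" where
  "layer_arc a Apex w = False"
| "layer_arc a (RX i) Apex = True"
| "layer_arc a (RY i) Apex = True"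
| "layer_arc a (RX i) (RX j) = (i < j)"
| "layer_arc a (RY i) (RY j) = (i < j)"
| "layer_arc a (RX i) (RY j) = (a \<noteq> 0)"
| "layer_arc a (RY i) (RX j) = (a = 0)"

fun arc_0_to_1 :: "rvert \<Rightarrow> rvert \<Rightarrow> bool" where
  "arc_0_to_1 v Apex = True"
| "arc_0_to_1 v (RX i) = True"
| "arc_0_to_1 (RY j) (RY i) = (j < i)"
| "arc_0_to_1 _ (RY i) = False"

fun arc_2_to_1 :: "rvert \<Rightarrow> rvert \<Rightarrow> bool" where
  "arc_2_to_1 v Apex = True"
| "arc_2_to_1 v (RY i) = True"
| "arc_2_to_1 (RX j) (RX i) = (j < i)"
| "arc_2_to_1 _ (RX i) = False"

fun P3_raft_arc :: "nat \<times> rvert \<Rightarrow> nat \<times> rvert \<Rightarrow> bool" where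
  "P3_raft_arc (a, v) (b, w) =
    (if a = b then layer_arc a v w
     else if a = 0 \<and> b = 1 then arc_0_to_1 v w
     else if a = 1 \<and> b = 0 then \<not> arc_0_to_1 w v
     else if a = 2 \<and> b = 1 then arc_2_to_1 v w
     else if a = 1 \<and> b = 2 then \<not> arc_2_to_1 w v
     else False)"

abbreviation P3_raft_E :: "nat \<Rightarrow> nat \<times> rvert \<Rightarrow> nat \<times> rvert \<Rightarrow> bool" where
  "P3_raft_E n \<equiv> strong_prod_E P3_V P3_E (raft_apex_V n) (raft_apex_E n)"

lemma P3_raft_arc_antisym:
  assumes "P3_raft_E n p q"
  shows "P3_raft_arc p q \<noteq> P3_raft_arc q p"
proof -
  obtain a v b w where "p = (a, v)" "q = (b, w)"
    "a \<in> P3_V" "b \<in> P3_V" "v \<in> raft_apex_V n" "w \<in> raft_apex_V n"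
    using assms by (cases p; cases q) (auto simp: strong_prod_E_def)
  with assms show ?thesis
    by (elim P3_V_cases raft_apex_V_cases)
       (auto simp: strong_prod_E_def P3_E_def P3_V_def raft_apex_E_def)
qed

lemma P3_raft_arc_out_clique:
  assumes "P3_raft_E n p q" "P3_raft_E n p r" "P3_raft_arc p q" "P3_raft_arc p r" "q \<noteq> r"
  shows "P3_raft_E n q r"
proof -
  obtain a v b w c x where "p = (a, v)" "q = (b, w)" "r = (c, x)"
    "a \<in> P3_V" "b \<in> P3_V" "c \<in> P3_V"
    "v \<in> raft_apex_V n" "w \<in> raft_apex_V n" "x \<in> raft_apex_V n"
    using assms by (cases p; cases q; cases r) (auto simp: strong_prod_E_def)
  with assms show ?thesis
    by (elim P3_V_cases raft_apex_V_cases)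
       (auto simp: strong_prod_E_def P3_E_def P3_V_def raft_apex_E_def)
qed

theorem corollary20:
  fixes n :: nat
  shows "one_perfectly_orientable (strong_prod_V P3_V (raft_apex_V n))
           (strong_prod_E P3_V P3_E (raft_apex_V n) (raft_apex_E n))"
proof (rule one_perfectly_orientableI[where R = P3_raft_arc])
  show "\<And>p q. P3_raft_E n p q \<Longrightarrow> P3_raft_E n q p"
    by (rule strong_prod_E_sym[OF P3_E_sym raft_apex_E_sym])
qed (use strong_prod_E_in_V P3_raft_arc_antisym P3_raft_arc_out_clique in blast)+

end
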